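(* With notation as in the context (type $E_7$), let $\alpha$ be a positive root of $E_7$ with $\alpha\notin\Delta_7^+$, let $s\in\{1,3,4,5,6,7\}$ and let $\beta\in\Delta_s^+$. Then $f(\beta)\oplus f(\alpha)\in\Gamma_s^+$ if and only if $\beta+\alpha\in\Delta_s^+$ or $\beta-\alpha\in\Delta_s^+$.
   Context: Let $F=\{0,1,2,3\}$ be the group $\mathbb{Z}/2\times\mathbb{Z}/2$ with operation $\oplus$ (binary addition without carry) and symplectic form $(a|a')=0$ if $a=0$, $a'=0$ or $a=a'$, and $1$ otherwise. Let $V=F^3$ (elements written $abc$), with coordinatewise $\oplus$ and form $(abc|a'b'c')=(a|a')+(b|b')+(c|c')\in\mathbb{Z}/2$. Let $\Delta$ be the $E_7$ root system with simple roots $\alpha_1,\dots,\alpha_7$, $\langle\alpha_i,\alpha_i\rangle=2$, $\langle\alpha_i,\alpha_j\rangle=-1$ for $\{i,j\}\in\{\{1,3\},\{3,4\},\{4,5\},\{5,6\},\{6,7\},\{2,4\}\}$, $0$ otherwise; $\Lambda=\bigoplus\mathbb{Z}\alpha_i$, $\Delta^+$ the positive roots. Let $f:\Lambda\to V$ be the homomorphism with $f(\alpha_1)=100$, $f(\alpha_2)=030$, $f(\alpha_3)=300$, $f(\alpha_4)=111$, $f(\alpha_5)=003$, $f(\alpha_6)=001$, $f(\alpha_7)=033$. For $\beta=\sum\beta^i\alpha_i\in\Delta^+$ let $m(\beta)=\max\{i:\beta^i\ne0\}$; set $\Delta_1^+=\{\alpha_1\}$, $\Delta_3^+=\{\beta: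 m(\beta)\in\{2,3\}\}$, $\Delta_s^+=\{\beta: m(\beta)=s\}$ for $s=4,\dots,7$, and $\Gamma_s^+=f(\Delta_s^+)$. *)

theory Defs
  imports Main
begin

text \<open>F = {0,1,2,3} with binary addition without carry (bitwise xor on nat).
  V = F^3, elements written abc, represented as triples.\<close>

type_synonym vecV = "nat \<times> nat \<times> nat"

definition Fset :: "nat set" where "Fset = {0,1,2,3}"

definition Vset :: "vecV set" where "Vset = Fset \<times> Fset \<times> Fset"

definition oplusV :: "vecV \<Rightarrow> vecV \<Rightarrow> vecV" (infixl "\<oplus>\<^sub>V" 65) where
  "oplusV u w = (xor (fst u) (fst w), xor (fst (snd u)) (fst (snd w)),
                 xor (snd (snd u)) (snd (snd w)))"

definition zeroV :: vecV where "zeroV = (0,0,0)"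

text \<open>Elements of \<Lambda> = \<oplus> Z alpha_i are coefficient functions nat \<Rightarrow> int supported in {1..7};
  beta corresponds to \<Sum> beta i * alpha_i.\<close>

definition Lam :: "(nat \<Rightarrow> int) set" where
  "Lam = {\<beta>. \<forall>i. i \<notin> {1..7} \<longrightarrow> \<beta> i = 0}"

definition simple_root :: "nat \<Rightarrow> nat \<Rightarrow> int" where
  "simple_root i = (\<lambda>j. if j = i then 1 else 0)"

definition E7_edge :: "nat \<Rightarrow> nat \<Rightarrow> bool" where
  "E7_edge i j \<longleftrightarrow> {i,j} \<in> {{1,3},{3,4},{4,5},{5,6},{6,7},{2,4}}"

definition E7_cartan :: "nat \<Rightarrow> nat \<Rightarrow> int" where
  "E7_cartan i j = (if i = j then 2 else if E7_edge i j then -1 else 0)"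

definition E7_form :: "(nat \<Rightarrow> int) \<Rightarrow> (nat \<Rightarrow> int) \<Rightarrow> int" where
  "E7_form \<beta> \<gamma> = (\<Sum>i\<in>{1..7}. \<Sum>j\<in>{1..7}. \<beta> i * \<gamma> j * E7_cartan i j)"

text \<open>The E7 root system (simply laced): the vectors of norm 2 in the root lattice.\<close>
definition E7_roots :: "(nat \<Rightarrow> int) set" where
  "E7_roots = {\<beta> \<in> Lam. E7_form \<beta> \<beta> = 2}"

definition E7_pos :: "(nat \<Rightarrow> int) set" where
  "E7_pos = {\<beta> \<in> E7_roots. \<forall>i. 0 \<le> \<beta> i}"

definition f_simple :: "nat \<Rightarrow> vecV" where
  "f_simple i = (if i = 1 then (1,0,0) else if i = 2 then (0,3,0)
     else if i = 3 then (3,0,0) else if i = 4 then (1,1,1)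
     else if i = 5 then (0,0,3) else if i = 6 then (0,0,1)
     else if i = 7 then (0,3,3) else zeroV)"

text \<open>n * v in V equals v for n odd and 0 for n even (V has exponent 2); f is the
  unique homomorphism extending f_simple.\<close>
definition smulV :: "int \<Rightarrow> vecV \<Rightarrow> vecV" where
  "smulV n v = (if odd n then v else zeroV)"

definition fE7 :: "(nat \<Rightarrow> int) \<Rightarrow> vecV" where
  "fE7 \<beta> = foldr (\<lambda>i acc. smulV (\<beta> i) (f_simple i) \<oplus>\<^sub>V acc) [1..<8] zeroV"

definition mE7 :: "(nat \<Rightarrow> int) \<Rightarrow> nat" where
  "mE7 \<beta> = Max {i \<in> {1..7}. \<beta> i \<noteq> 0}"

definition Delta_s :: "nat \<Rightarrow> (nat \<Rightarrow> int) set" where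
  "Delta_s s = (if s = 1 then {simple_root 1}
     else if s = 3 then {\<beta> \<in> E7_pos. mE7 \<beta> \<in> {2,3}}
     else {\<beta> \<in> E7_pos. mE7 \<beta> = s})"

definition Gamma_s :: "nat \<Rightarrow> vecV set" where
  "Gamma_s s = fE7 ` Delta_s s"

end

theory Submission
  imports Defs
begin

text \<open>The positive roots are computed rather than quoted. The form is positive definite, so
  a positive root beta that is not simple has a simple root alpha_i in its support with
  <beta, alpha_i> = 1, and beta - alpha_i is again a positive root. By induction on the height,
  every positive root is therefore reached from a simple root by adding simple roots while the
  norm stays 2, which identifies the positive roots with an explicit table of 63 coefficient
  vectors. On this table f, Delta_s^+ and Gamma_s^+ are computed directly, and the theorem
  becomes a finite check over all pairs (alpha, beta).\<close>

lemma E7_cartan_sym: "E7_cartan i j = E7_cartan j i"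
  unfolding E7_cartan_def E7_edge_def by (simp add: insert_commute)

lemma E7_form_sym: "E7_form \<beta> \<gamma> = E7_form \<gamma> \<beta>"
  unfolding E7_form_def by (subst sum.swap) (simp add: E7_cartan_sym mult_ac)

lemma E7_form_diff_left: "E7_form (\<lambda>k. \<beta> k - \<gamma> k) \<delta> = E7_form \<beta> \<delta> - E7_form \<gamma> \<delta>"
  unfolding E7_form_def by (simp add: algebra_simps sum_subtractf)

lemma E7_form_diff_right: "E7_form \<delta> (\<lambda>k. \<beta> k - \<gamma> k) = E7_form \<delta> \<beta> - E7_form \<delta> \<gamma>"
  unfolding E7_form_def by (simp add: algebra_simps sum_subtractf)

lemma E7_form_diff_self:
  "E7_form (\<lambda>k. \<beta> k - \<gamma> k) (\<lambda>k. \<beta> k - \<gamma> k) = E7_form \<beta> \<beta> - 2 * E7_form \<beta> \<gamma> + E7_form \<gamma> \<gamma>"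
  by (simp add: E7_form_diff_left E7_form_diff_right E7_form_sym[of \<gamma> \<beta>])

lemma E7_form_simple_root:
  assumes "i \<in> {1..7}" shows "E7_form \<beta> (simple_root i) = (\<Sum>k\<in>{1..7}. \<beta> k * E7_cartan k i)"
proof -
  have "\<beta> k * simple_root i j * E7_cartan k j = (if i = j then \<beta> k * E7_cartan k i else 0)" for k j
    by (simp add: simple_root_def)
  then show ?thesis
    unfolding E7_form_def using assms by simp
qed

lemma E7_form_simple_root_self:
  assumes "i \<in> {1..7}" shows "E7_form (simple_root i) (simple_root i) = 2"
proof -
  have "simple_root i k * E7_cartan k i = (if i = k then E7_cartan i i else 0)" for k
    by (simp add: simple_root_def)
  then show ?thesis
    unfolding E7_form_simple_root[OF assms] using assms by (simp add: E7_cartan_def)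
qed

lemma E7_form_self_sum_simple_roots: "E7_form \<beta> \<beta> = (\<Sum>i\<in>{1..7}. \<beta> i * E7_form \<beta> (simple_root i))"
proof -
  have "(\<Sum>i\<in>{1..7}. \<beta> i * E7_form \<beta> (simple_root i))
      = (\<Sum>i\<in>{1..7}. \<Sum>k\<in>{1..7}. \<beta> i * \<beta> k * E7_cartan i k)"
    by (intro sum.cong refl)
      (simp add: E7_form_simple_root sum_distrib_left E7_cartan_sym mult_ac)
  then show ?thesis by (simp add: E7_form_def)
qed

definition coeff_list :: "(nat \<Rightarrow> int) \<Rightarrow> int list" where
  "coeff_list \<beta> = map \<beta> [1..<8]"

definition of_coeff_list :: "int list \<Rightarrow> nat \<Rightarrow> int" where
  "of_coeff_list l i = (if 1 \<le> i \<and> i \<le> 7 then l ! (i - 1) else 0)"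

lemma coeff_list_explicit: "coeff_list \<beta> = [\<beta> 1, \<beta> 2, \<beta> 3, \<beta> 4, \<beta> 5, \<beta> 6, \<beta> 7]"
proof -
  have "[1..<8] = [1, 2, 3, 4, 5, 6, 7::nat]" by (simp add: upt_rec)
  then show ?thesis by (simp add: coeff_list_def)
qed

lemma coeff_list_of_coeff_list: "length l = 7 \<Longrightarrow> coeff_list (of_coeff_list l) = l"
  by (simp add: coeff_list_def of_coeff_list_def list_eq_iff_nth_eq)

lemma of_coeff_list_coeff_list: "\<beta> \<in> Lam \<Longrightarrow> of_coeff_list (coeff_list \<beta>) = \<beta>"
  by (auto simp: fun_eq_iff of_coeff_list_def coeff_list_def Lam_def nth_map)

lemma of_coeff_list_in_Lam: "of_coeff_list l \<in> Lam"
  by (simp add: Lam_def of_coeff_list_def)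

lemma of_coeff_list_inj: "inj_on of_coeff_list {l. length l = 7}"
  by (rule inj_on_inverseI[of _ coeff_list]) (simp add: coeff_list_of_coeff_list)

lemma of_coeff_list_add:
  "length l = 7 \<Longrightarrow> length l' = 7 \<Longrightarrow>
     (\<lambda>k. of_coeff_list l k + of_coeff_list l' k) = of_coeff_list (map2 (+) l l')"
  by (rule ext) (auto simp: of_coeff_list_def)

lemma of_coeff_list_diff:
  "length l = 7 \<Longrightarrow> length l' = 7 \<Longrightarrow>
     (\<lambda>k. of_coeff_list l k - of_coeff_list l' k) = of_coeff_list (map2 (-) l l')"
  by (rule ext) (auto simp: of_coeff_list_def)

definition E7_norm :: "int list \<Rightarrow> int" where
  "E7_norm l = 2 * (\<Sum>x\<leftarrow>l. x\<^sup>2)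
     - 2 * (l!0 * l!2 + l!2 * l!3 + l!3 * l!4 + l!4 * l!5 + l!5 * l!6 + l!1 * l!3)"

lemma E7_form_self_eq_norm: "E7_form \<beta> \<beta> = E7_norm (coeff_list \<beta>)"
proof -
  have "{1..7::nat} = {1,2,3,4,5,6,7}" by auto
  then show ?thesis
    unfolding E7_form_def E7_cartan_def E7_edge_def E7_norm_def coeff_list_explicit
    by (simp add: doubleton_eq_iff power2_eq_square algebra_simps)
qed

text \<open>Completing the square in the order beta 1, ..., beta 7 (an LDL^T factorisation of the
  Gram matrix).\<close>
lemma E7_form_self_sos:
  "60 * E7_form \<beta> \<beta> = 30 * (2 * \<beta> 1 - \<beta> 3)\<^sup>2 + 30 * (2 * \<beta> 2 - \<beta> 4)\<^sup>2
     + 10 * (3 * \<beta> 3 - 2 * \<beta> 4)\<^sup>2 + 2 * (5 * \<beta> 4 - 6 * \<beta> 5)\<^sup>2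
     + 3 * (4 * \<beta> 5 - 5 * \<beta> 6)\<^sup>2 + 5 * (3 * \<beta> 6 - 4 * \<beta> 7)\<^sup>2 + 40 * (\<beta> 7)\<^sup>2"
  unfolding E7_form_self_eq_norm E7_norm_def coeff_list_explicit
  by (simp add: power2_eq_square algebra_simps)

lemma E7_form_self_nonneg: "0 \<le> E7_form \<beta> \<beta>"
  using E7_form_self_sos[of \<beta>] by (smt (verit) zero_le_power2)

lemma E7_form_self_eq_0:
  assumes "\<beta> \<in> Lam" and "E7_form \<beta> \<beta> = 0" shows "\<beta> = (\<lambda>_. 0)"
proof
  fix i
  have "(\<beta> 7)\<^sup>2 = 0" "(3 * \<beta> 6 - 4 * \<beta> 7)\<^sup>2 = 0" "(4 * \<beta> 5 - 5 * \<beta> 6)\<^sup>2 = 0"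
    "(5 * \<beta> 4 - 6 * \<beta> 5)\<^sup>2 = 0" "(3 * \<beta> 3 - 2 * \<beta> 4)\<^sup>2 = 0"
    "(2 * \<beta> 2 - \<beta> 4)\<^sup>2 = 0" "(2 * \<beta> 1 - \<beta> 3)\<^sup>2 = 0"
    using E7_form_self_sos[of \<beta>] assms(2) by (smt (verit) zero_le_power2)+
  then have "i \<in> {1..7} \<Longrightarrow> \<beta> i = 0"
    by (auto simp: numeral_eq_Suc le_Suc_eq)
  then show "\<beta> i = 0" using assms(1) by (auto simp: Lam_def)
qed

lemma E7_pos_descent:
  assumes "\<beta> \<in> E7_pos"
  obtains i where "i \<in> {1..7}" "\<beta> = simple_root i"
    | i where "i \<in> {1..7}" "(\<lambda>k. \<beta> k - simple_root i k) \<in> E7_pos"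
proof -
  have \<beta>: "\<beta> \<in> Lam" "E7_form \<beta> \<beta> = 2" "\<And>k. 0 \<le> \<beta> k"
    using assms by (auto simp: E7_pos_def E7_roots_def)
  have "\<exists>i\<in>{1..7}. 0 < \<beta> i \<and> 0 < E7_form \<beta> (simple_root i)"
  proof (rule ccontr)
    assume no_witness: "\<not> ?thesis"
    have "\<beta> i * E7_form \<beta> (simple_root i) \<le> 0" if "i \<in> {1..7}" for i
    proof -
      have "\<beta> i = 0 \<or> E7_form \<beta> (simple_root i) \<le> 0"
        using no_witness that \<beta>(3)[of i] by force
      then show ?thesis using \<beta>(3)[of i] by (auto intro: mult_nonneg_nonpos)
    qed
    then have "E7_form \<beta> \<beta> \<le> 0"
      unfolding E7_form_self_sum_simple_roots by (rule sum_nonpos)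
    with \<beta>(2) show False by simp
  qed
  then obtain i where i: "i \<in> {1..7}" "0 < \<beta> i" "0 < E7_form \<beta> (simple_root i)"
    by blast
  define \<gamma> where "\<gamma> = (\<lambda>k. \<beta> k - simple_root i k)"
  have norm_\<gamma>: "E7_form \<gamma> \<gamma> = 4 - 2 * E7_form \<beta> (simple_root i)"
    unfolding \<gamma>_def E7_form_diff_self E7_form_simple_root_self[OF i(1)] \<beta>(2) by simp
  have "\<gamma> \<in> Lam"
    using \<beta>(1) i(1) by (auto simp: Lam_def \<gamma>_def simple_root_def)
  consider "E7_form \<beta> (simple_root i) = 2" | "E7_form \<beta> (simple_root i) = 1"
    using norm_\<gamma> E7_form_self_nonneg[of \<gamma>] i(3) by linarith
  then show ?thesis
  proof cases
    case 1
    then have "\<gamma> = (\<lambda>_. 0)"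
      using E7_form_self_eq_0[OF \<open>\<gamma> \<in> Lam\<close>] norm_\<gamma> by simp
    then have "\<beta> = simple_root i"
      by (simp add: \<gamma>_def fun_eq_iff)
    with i(1) that(1) show ?thesis by blast
  next
    case 2
    have "0 \<le> \<gamma> k" for k
      using \<beta>(3)[of k] i(2) by (simp add: \<gamma>_def simple_root_def)
    then have "\<gamma> \<in> E7_pos"
      using \<open>\<gamma> \<in> Lam\<close> norm_\<gamma> 2 by (simp add: E7_pos_def E7_roots_def)
    with i(1) that(2) show ?thesis by (simp add: \<gamma>_def)
  qed
qed

definition E7_pos_table :: "(int list \<times> vecV) list" where
  "E7_pos_table = [
     ([1,0,0,0,0,0,0], (1,0,0)), ([0,1,0,0,0,0,0], (0,3,0)), ([0,0,1,0,0,0,0], (3,0,0)),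
     ([0,0,0,1,0,0,0], (1,1,1)), ([0,0,0,0,1,0,0], (0,0,3)), ([0,0,0,0,0,1,0], (0,0,1)),
     ([0,0,0,0,0,0,1], (0,3,3)),
     ([1,0,1,0,0,0,0], (2,0,0)), ([0,1,0,1,0,0,0], (1,2,1)), ([0,0,1,1,0,0,0], (2,1,1)),
     ([0,0,0,1,1,0,0], (1,1,2)), ([0,0,0,0,1,1,0], (0,0,2)), ([0,0,0,0,0,1,1], (0,3,2)),
     ([1,0,1,1,0,0,0], (3,1,1)), ([0,1,1,1,0,0,0], (2,2,1)), ([0,1,0,1,1,0,0], (1,2,2)),
     ([0,0,1,1,1,0,0], (2,1,2)), ([0,0,0,1,1,1,0], (1,1,3)), ([0,0,0,0,1,1,1], (0,3,1)),
     ([1,1,1,1,0,0,0], (3,2,1)), ([1,0,1,1,1,0,0], (3,1,2)), ([0,1,1,1,1,0,0], (2,2,2)),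
     ([0,1,0,1,1,1,0], (1,2,3)), ([0,0,1,1,1,1,0], (2,1,3)), ([0,0,0,1,1,1,1], (1,2,0)),
     ([1,1,1,1,1,0,0], (3,2,2)), ([0,1,1,2,1,0,0], (3,3,3)), ([1,0,1,1,1,1,0], (3,1,3)),
     ([0,1,1,1,1,1,0], (2,2,3)), ([0,1,0,1,1,1,1], (1,1,0)), ([0,0,1,1,1,1,1], (2,2,0)),
     ([1,1,1,2,1,0,0], (2,3,3)), ([1,1,1,1,1,1,0], (3,2,3)), ([0,1,1,2,1,1,0], (3,3,2)),
     ([1,0,1,1,1,1,1], (3,2,0)), ([0,1,1,1,1,1,1], (2,1,0)),
     ([1,1,2,2,1,0,0], (1,3,3)), ([1,1,1,2,1,1,0], (2,3,2)), ([0,1,1,2,2,1,0], (3,3,1)),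
     ([1,1,1,1,1,1,1], (3,1,0)), ([0,1,1,2,1,1,1], (3,0,1)),
     ([1,1,2,2,1,1,0], (1,3,2)), ([1,1,1,2,2,1,0], (2,3,1)), ([1,1,1,2,1,1,1], (2,0,1)),
     ([0,1,1,2,2,1,1], (3,0,2)),
     ([1,1,2,2,2,1,0], (1,3,1)), ([1,1,2,2,1,1,1], (1,0,1)), ([1,1,1,2,2,1,1], (2,0,2)),
     ([0,1,1,2,2,2,1], (3,0,3)),
     ([1,1,2,3,2,1,0], (0,2,0)), ([1,1,2,2,2,1,1], (1,0,2)), ([1,1,1,2,2,2,1], (2,0,3)),
     ([1,2,2,3,2,1,0], (0,1,0)), ([1,1,2,3,2,1,1], (0,1,3)), ([1,1,2,2,2,2,1], (1,0,3)),
     ([1,2,2,3,2,1,1], (0,2,3)), ([1,1,2,3,2,2,1], (0,1,2)),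
     ([1,2,2,3,2,2,1], (0,2,2)), ([1,1,2,3,3,2,1], (0,1,1)),
     ([1,2,2,3,3,2,1], (0,2,1)),
     ([1,2,2,4,3,2,1], (1,3,0)),
     ([1,2,3,4,3,2,1], (2,3,0)),
     ([2,2,3,4,3,2,1], (3,3,0))]"

lemma E7_pos_table_roots:
  "\<forall>(l, v)\<in>set E7_pos_table. length l = 7 \<and> list_all ((\<le>) 0) l \<and> E7_norm l = 2"
  by code_simp

lemma E7_pos_table_image: "\<forall>(l, v)\<in>set E7_pos_table. fE7 (of_coeff_list l) = v"
  unfolding E7_pos_table_def
  by (simp add: fE7_def of_coeff_list_def smulV_def f_simple_def oplusV_def zeroV_def upt_rec)

lemma E7_pos_table_simple_roots:
  "\<forall>i\<in>set [1..<8]. coeff_list (simple_root i) \<in> fst ` set E7_pos_table"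
  by code_simp

lemma E7_pos_table_closed:
  "\<forall>l\<in>fst ` set E7_pos_table. \<forall>i\<in>set [1..<8].
     E7_norm (map2 (+) l (coeff_list (simple_root i))) = 2
       \<longrightarrow> map2 (+) l (coeff_list (simple_root i)) \<in> fst ` set E7_pos_table"
  by code_simp

lemma coeff_list_E7_pos: "\<beta> \<in> E7_pos \<Longrightarrow> coeff_list \<beta> \<in> fst ` set E7_pos_table"
proof (induction "nat (sum \<beta> {1..7})" arbitrary: \<beta> rule: less_induct)
  case less
  from less.prems show ?case
  proof (cases rule: E7_pos_descent)
    case (1 i)
    then show ?thesis using E7_pos_table_simple_roots by auto
  next
    case (2 i)
    define \<gamma> where "\<gamma> = (\<lambda>k. \<beta> k - simple_root i k)"
    have "sum \<gamma> {1..7} = sum \<beta> {1..7} - 1"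
      using 2(1) by (simp add: \<gamma>_def sum_subtractf simple_root_def)
    moreover have "0 \<le> sum \<gamma> {1..7}"
      using 2(2) by (auto simp: \<gamma>_def E7_pos_def intro: sum_nonneg)
    ultimately have "coeff_list \<gamma> \<in> fst ` set E7_pos_table"
      using less.hyps 2(2) by (simp add: \<gamma>_def)
    moreover have "coeff_list \<beta> = map2 (+) (coeff_list \<gamma>) (coeff_list (simple_root i))"
      by (simp add: \<gamma>_def coeff_list_explicit)
    moreover have "E7_norm (coeff_list \<beta>) = 2"
      using less.prems by (simp add: E7_pos_def E7_roots_def E7_form_self_eq_norm)
    ultimately show ?thesis
      using E7_pos_table_closed 2(1) by auto
  qed
qed

lemma E7_pos_eq: "E7_pos = of_coeff_list ` fst ` set E7_pos_table"
proof (intro equalityI subsetI)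
  fix \<beta> assume "\<beta> \<in> E7_pos"
  then have "\<beta> = of_coeff_list (coeff_list \<beta>)" "coeff_list \<beta> \<in> fst ` set E7_pos_table"
    using of_coeff_list_coeff_list coeff_list_E7_pos by (auto simp: E7_pos_def E7_roots_def)
  then show "\<beta> \<in> of_coeff_list ` fst ` set E7_pos_table" by blast
next
  fix \<beta> assume "\<beta> \<in> of_coeff_list ` fst ` set E7_pos_table"
  then obtain l where l: "l \<in> fst ` set E7_pos_table" and \<beta>: "\<beta> = of_coeff_list l" by blast
  have "length l = 7" "list_all ((\<le>) 0) l" "E7_norm l = 2"
    using l E7_pos_table_roots by auto
  then have "E7_form \<beta> \<beta> = 2" and "0 \<le> \<beta> k" for k
    by (auto simp: \<beta> E7_form_self_eq_norm coeff_list_of_coeff_list of_coeff_list_def list_all_length)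
  then show "\<beta> \<in> E7_pos"
    using of_coeff_list_in_Lam by (simp add: \<beta> E7_pos_def E7_roots_def)
qed

definition top_index :: "int list \<Rightarrow> nat" where
  "top_index l = Max (set (filter (\<lambda>i. l ! (i - 1) \<noteq> 0) [1..<8]))"

lemma mE7_of_coeff_list: "mE7 (of_coeff_list l) = top_index l"
proof -
  have "{i \<in> {1..7}. of_coeff_list l i \<noteq> 0} = set (filter (\<lambda>i. l ! (i - 1) \<noteq> 0) [1..<8])"
    by (auto simp: of_coeff_list_def)
  then show ?thesis by (simp add: mE7_def top_index_def)
qed

definition Delta_table :: "nat \<Rightarrow> (int list \<times> vecV) list" where
  "Delta_table s = filter (\<lambda>(l, v). if s = 1 then l = [1,0,0,0,0,0,0]
     else top_index l \<in> (if s = 3 then {2,3} else {s})) E7_pos_table"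

lemma Delta_s_eq: "Delta_s s = of_coeff_list ` fst ` set (Delta_table s)"
proof (cases "s = 1")
  case True
  have "Delta_table 1 = [([1,0,0,0,0,0,0], (1,0,0))]" by code_simp
  moreover have "simple_root 1 = of_coeff_list [1,0,0,0,0,0,0]"
    by (auto simp: fun_eq_iff simple_root_def of_coeff_list_def nth_Cons')
  ultimately show ?thesis using True by (simp add: Delta_s_def)
next
  case False
  then have "Delta_s s = {\<beta> \<in> E7_pos. mE7 \<beta> \<in> (if s = 3 then {2,3} else {s})}"
    by (auto simp: Delta_s_def)
  also have "\<dots> = of_coeff_list ` fst ` set (Delta_table s)"
    using False unfolding E7_pos_eq Delta_table_def by (force simp: mE7_of_coeff_list)
  finally show ?thesis .
qed

lemma of_coeff_list_in_Delta_s: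
  assumes "length l = 7"
  shows "of_coeff_list l \<in> Delta_s s \<longleftrightarrow> l \<in> fst ` set (Delta_table s)"
proof -
  have "fst ` set (Delta_table s) \<subseteq> {l. length l = 7}"
    using E7_pos_table_roots by (auto simp: Delta_table_def)
  then show ?thesis
    unfolding Delta_s_eq using assms by (simp add: inj_on_image_mem_iff[OF of_coeff_list_inj])
qed

lemma fE7_Delta_table: "(l, v) \<in> set (Delta_table s) \<Longrightarrow> fE7 (of_coeff_list l) = v"
  using E7_pos_table_image by (auto simp: Delta_table_def)

lemma Gamma_s_eq: "Gamma_s s = snd ` set (Delta_table s)"
  unfolding Gamma_s_def Delta_s_eq image_image using fE7_Delta_table by force

definition oplus_iff_sum_or_diff ::
    "(int list \<times> vecV) list \<Rightarrow> (int list \<times> vecV) list \<Rightarrow> bool" where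
  "oplus_iff_sum_or_diff D A \<longleftrightarrow> (\<forall>(la, va)\<in>set A. \<forall>(lb, vb)\<in>set D.
     vb \<oplus>\<^sub>V va \<in> snd ` set D \<longleftrightarrow> map2 (+) lb la \<in> fst ` set D \<or> map2 (-) lb la \<in> fst ` set D)"

lemma oplus_iff_sum_or_diffD:
  assumes "oplus_iff_sum_or_diff D A" and "(la, va) \<in> set A" and "(lb, vb) \<in> set D"
  shows "vb \<oplus>\<^sub>V va \<in> snd ` set D \<longleftrightarrow> map2 (+) lb la \<in> fst ` set D \<or> map2 (-) lb la \<in> fst ` set D"
  using assms unfolding oplus_iff_sum_or_diff_def by fastforce

lemma E7_oplus_iff_sum_or_diff:
  assumes "s \<in> {1,3,4,5,6,7}"
  shows "oplus_iff_sum_or_diff (Delta_table s)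
           (filter (\<lambda>(l, v). l \<notin> fst ` set (Delta_table 7)) E7_pos_table)"
  using assms by (elim insertE emptyE; hypsubst; code_simp)

theorem mainTheorem11:
  fixes \<alpha> \<beta> :: "nat \<Rightarrow> int" and s :: nat
  assumes "\<alpha> \<in> E7_pos" and "\<alpha> \<notin> Delta_s 7"
    and "s \<in> {1,3,4,5,6,7}" and "\<beta> \<in> Delta_s s"
  shows "fE7 \<beta> \<oplus>\<^sub>V fE7 \<alpha> \<in> Gamma_s s \<longleftrightarrow>
         (\<lambda>i. \<beta> i + \<alpha> i) \<in> Delta_s s \<or> (\<lambda>i. \<beta> i - \<alpha> i) \<in> Delta_s s"
proof -
  obtain la va where a: "(la, va) \<in> set E7_pos_table" "\<alpha> = of_coeff_list la"
    using assms(1) unfolding E7_pos_eq by force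
  obtain lb vb where b: "(lb, vb) \<in> set (Delta_table s)" "\<beta> = of_coeff_list lb"
    using assms(4) unfolding Delta_s_eq by force
  have len: "length la = 7" "length lb = 7"
    using a(1) b(1) E7_pos_table_roots by (auto simp: Delta_table_def)
  have f: "fE7 \<alpha> = va" "fE7 \<beta> = vb"
    using a b E7_pos_table_image fE7_Delta_table by auto
  have "la \<notin> fst ` set (Delta_table 7)"
    using assms(2) a(2) of_coeff_list_in_Delta_s[OF len(1)] by simp
  then have "vb \<oplus>\<^sub>V va \<in> snd ` set (Delta_table s) \<longleftrightarrow>
      map2 (+) lb la \<in> fst ` set (Delta_table s) \<or> map2 (-) lb la \<in> fst ` set (Delta_table s)"
    using oplus_iff_sum_or_diffD[OF E7_oplus_iff_sum_or_diff[OF assms(3)] _ b(1)] a(1) by simp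
  then show ?thesis
    using len f a(2) b(2)
    by (simp add: Gamma_s_eq of_coeff_list_add of_coeff_list_diff of_coeff_list_in_Delta_s)
qed

end
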